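(* Let $d\ge1$, $D=\{1,\dots,d\}$, let $\Pi$ and $Q$ be $d\times d$ stochastic matrices indexed by $D$, and define $\mathcal{E}^{(O)}_H:\mathcal{M}_d\otimes\mathcal{M}_d\to\mathcal{M}_d$ by linear extension of $\mathcal{E}^{(O)}_H(a\otimes b)=\mathcal{E}_H(\mathcal{E}_{H,O}(a\otimes\mathbf{1}_d)\otimes b)$. Then $\mathcal{E}^{(O)}_H$ is completely positive and identity preserving, and for all $a,b\in\mathcal{M}_d$ $$\mathcal{E}^{(O)}_H(a\otimes b)=a\diamond P_{H,O}(\mathbf{1}_d)\diamond P_H(b)=\sum_{i,j,k,m,l\in D}a_{ij}b_{ml}\sqrt{Q_{ik}Q_{jk}}\sqrt{\Pi_{im}\Pi_{jl}}\,e_{ij},$$ where $a=(a_{ij})$, $b=(b_{ij})$.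
   Context: $\mathcal{M}_d$ is the algebra of complex $d\times d$ matrices with identity $\mathbf{1}_d$ and matrix units $e_{ij}$; $\diamond$ is the Schur (entrywise) product. A stochastic matrix has nonnegative entries and row sums $1$. $P_H(A)=\sum_{i,j,k,l\in D}\sqrt{\Pi_{ik}\Pi_{jl}}\,a_{kl}e_{ij}$, $P_{H,O}(B)=\sum_{i,j,k,l\in D}\sqrt{Q_{ik}Q_{jl}}\,b_{kl}e_{ij}$, and $\mathcal{E}_H,\mathcal{E}_{H,O}$ are the linear extensions of $\mathcal{E}_H(a\otimes b)=a\diamond P_H(b)$, $\mathcal{E}_{H,O}(a\otimes b)=a\diamond P_{H,O}(b)$. *)

theory Defs
  imports "HOL-Analysis.Analysis"
begin

text \<open>Matrices in M_d are complex^'n^'n for a finite index type 'n (the set D, d = CARD('n)).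
  M_d \<otimes> M_d is identified with M_{d^2} = complex^('n*'n)^('n*'n) via the Kronecker product.\<close>

type_synonym 'n cmat = "complex^'n^'n"

definition stochastic :: "real^('n::finite)^'n \<Rightarrow> bool" where
  "stochastic S \<longleftrightarrow> (\<forall>i j. 0 \<le> S$i$j) \<and> (\<forall>i. (\<Sum>j\<in>UNIV. S$i$j) = 1)"

definition schur :: "complex^'n^'m \<Rightarrow> complex^'n^'m \<Rightarrow> complex^'n^'m" (infixl "\<diamond>" 70) where
  "a \<diamond> b = (\<chi> i j. a$i$j * b$i$j)"

definition kron :: "('n::finite) cmat \<Rightarrow> 'n cmat \<Rightarrow> ('n \<times> 'n) cmat" (infixr "\<otimes>\<^sub>K" 75) where
  "a \<otimes>\<^sub>K b = (\<chi> p q. a$(fst p)$(fst q) * b$(snd p)$(snd q))"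

definition mscale :: "complex \<Rightarrow> complex^'n^'m \<Rightarrow> complex^'n^'m" where
  "mscale c X = (\<chi> i j. c * X$i$j)"

definition mlinear :: "(complex^'a^'b \<Rightarrow> complex^'c^'e) \<Rightarrow> bool" where
  "mlinear F \<longleftrightarrow> (\<forall>X Y. F (X + Y) = F X + F Y) \<and> (\<forall>c X. F (mscale c X) = mscale c (F X))"

text \<open>P_H (with S = Pi) and P_{H,O} (with S = Q).\<close>
definition Pmap :: "real^('n::finite)^'n \<Rightarrow> 'n cmat \<Rightarrow> 'n cmat" where
  "Pmap S b = (\<chi> i j. \<Sum>k\<in>UNIV. \<Sum>l\<in>UNIV.
      complex_of_real (sqrt (S$i$k * S$j$l)) * b$k$l)"

text \<open>E_H (with S = Pi) and E_{H,O} (with S = Q): the linear extension of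
  a \<otimes> b \<mapsto> a \<diamond> Pmap S b, written out explicitly on M_d \<otimes> M_d = M_{d^2}.\<close>
definition Emap :: "real^('n::finite)^'n \<Rightarrow> ('n \<times> 'n) cmat \<Rightarrow> 'n cmat" where
  "Emap S X = (\<chi> i j. \<Sum>k\<in>UNIV. \<Sum>l\<in>UNIV.
      complex_of_real (sqrt (S$i$k * S$j$l)) * X$(i,k)$(j,l))"

definition psd_block :: "nat \<Rightarrow> (nat \<Rightarrow> nat \<Rightarrow> complex^('m::finite)^'m) \<Rightarrow> bool" where
  "psd_block n X \<longleftrightarrow> (\<forall>v :: nat \<Rightarrow> 'm \<Rightarrow> complex.
     let s = (\<Sum>i<n. \<Sum>j<n. \<Sum>p\<in>UNIV. \<Sum>q\<in>UNIV. cnj (v i p) * X i j $ p $ q * v j q)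
     in Im s = 0 \<and> Re s \<ge> 0)"

text \<open>Complete positivity: id_n \<otimes> F is positive for every n.\<close>
definition completely_positive :: "(complex^('a::finite)^'a \<Rightarrow> complex^('b::finite)^'b) \<Rightarrow> bool" where
  "completely_positive F \<longleftrightarrow>
     (\<forall>n X. psd_block n X \<longrightarrow> psd_block n (\<lambda>i j. F (X i j)))"

end

theory Submission
  imports Defs
begin

text \<open>On elementary tensors both stages of \<open>EO\<close> are Schur products,
  \<open>Emap S (a \<otimes>\<^sub>K b) = a \<diamond> Pmap S b\<close>, so by linearity \<open>EO X = Pmap Q 1 \<diamond> Emap Pi X\<close>.
  The entries of \<open>Pmap Q 1\<close> are \<open>\<Sum>r. sqrt (Q i r) * sqrt (Q j r)\<close>, which puts this map in
  Kraus form \<open>X \<mapsto> \<Sum>r. K\<^sub>r\<^sup>* X K\<^sub>r\<close> with \<open>K\<^sub>r (p, k) i = [p = i] sqrt (Q i r * Pi i k)\<close>;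
  maps in Kraus form are completely positive. Unitality holds because the diagonal entries of
  \<open>Pmap S 1\<close> are the row sums of \<open>S\<close>.\<close>

lemma sum_rotate3:
  "(\<Sum>i\<in>A. \<Sum>j\<in>B. \<Sum>k\<in>C. f i j k) = (\<Sum>k\<in>C. \<Sum>i\<in>A. \<Sum>j\<in>B. f i j k)"
  by (simp only: sum.swap[of _ B C] sum.swap[of _ A C])

lemma sum_swap_pairs:
  "(\<Sum>i\<in>A. \<Sum>j\<in>B. \<Sum>k\<in>C. \<Sum>l\<in>D. f i j k l) = (\<Sum>k\<in>C. \<Sum>l\<in>D. \<Sum>i\<in>A. \<Sum>j\<in>B. f i j k l)"
proof -
  have "(\<Sum>i\<in>A. \<Sum>j\<in>B. \<Sum>k\<in>C. \<Sum>l\<in>D. f i j k l) = (\<Sum>k\<in>C. \<Sum>i\<in>A. \<Sum>j\<in>B. \<Sum>l\<in>D. f i j k l)"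
    by (rule sum_rotate3)
  also have "\<dots> = (\<Sum>k\<in>C. \<Sum>l\<in>D. \<Sum>i\<in>A. \<Sum>j\<in>B. f i j k l)"
    by (rule sum.cong[OF refl], rule sum_rotate3)
  finally show ?thesis .
qed

lemma sum_UNIV_prod:
  "(\<Sum>x\<in>(UNIV :: ('a::finite \<times> 'b::finite) set). f x) = (\<Sum>a\<in>UNIV. \<Sum>b\<in>UNIV. f (a, b))"
  by (simp add: sum.cartesian_product)

lemma sum_if_zero: "(\<Sum>x\<in>A. if P then f x else 0) = (if P then sum f A else 0)"
  by simp

lemma mlinear_zero:
  assumes "mlinear F" shows "F 0 = 0"
proof -
  have "F 0 + F 0 = F 0 + 0"
    using assms unfolding mlinear_def by (metis add.right_neutral)
  then show ?thesis by simp
qed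

lemma mlinear_sum: "mlinear F \<Longrightarrow> F (sum f A) = (\<Sum>x\<in>A. F (f x))"
  by (induction A rule: infinite_finite_induct) (auto simp: mlinear_zero mlinear_def)

text \<open>The inner condition is on the column index so that \<open>sum.delta'\<close> can eliminate the
  inner sum of a matrix expansion.\<close>

lemma axis_axis_nth: "axis p (axis q 1) $ s $ t = (if t = q then if s = p then 1 else 0 else 0)"
  by (simp add: axis_def)

lemma matrix_expansion_axis:
  "X = (\<Sum>p\<in>UNIV. \<Sum>q\<in>UNIV. mscale (X$p$q) (axis p (axis q 1)))"
  by (simp add: vec_eq_iff sum_component mscale_def axis_axis_nth mult.commute[of "X$_$_"]
      if_distrib[of "\<lambda>z. z * _"] sum.delta' cong: if_cong)

lemma axis_axis_kron:
  "axis p (axis q 1) = axis (fst p) (axis (fst q) 1) \<otimes>\<^sub>K axis (snd p) (axis (snd q) 1)"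
  by (auto simp: vec_eq_iff axis_def kron_def prod_eq_iff)

lemma mlinear_eq_on_kron:
  assumes "mlinear F" "mlinear G" "\<And>a b. F (a \<otimes>\<^sub>K b) = G (a \<otimes>\<^sub>K b)"
  shows "F = G"
proof
  fix X
  have "F (axis p (axis q 1)) = G (axis p (axis q 1))" for p q
    by (subst (1 2) axis_axis_kron) (rule assms(3))
  then show "F X = G X"
    using assms(1,2)
    by (subst (1 2) matrix_expansion_axis) (simp add: mlinear_sum mlinear_def)
qed

text \<open>\<open>K r p i\<close> is the \<open>(p, i)\<close> entry of the \<open>r\<close>-th Kraus operator \<open>K\<^sub>r\<close>,
  so that \<open>kraus_map K X = (\<Sum>r. K\<^sub>r\<^sup>* X K\<^sub>r)\<close>.\<close>

definition kraus_map ::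
    "('r::finite \<Rightarrow> 'a::finite \<Rightarrow> 'b::finite \<Rightarrow> complex) \<Rightarrow> complex^'a^'a \<Rightarrow> complex^'b^'b"
  where
  "kraus_map K X = (\<chi> i j. \<Sum>r\<in>UNIV. \<Sum>p\<in>UNIV. \<Sum>q\<in>UNIV. cnj (K r p i) * X$p$q * K r q j)"

lemma kraus_map_quadratic_form:
  "(\<Sum>i\<in>UNIV. \<Sum>j\<in>UNIV. cnj (x i) * kraus_map K Y $ i $ j * y j)
     = (\<Sum>r\<in>UNIV. \<Sum>p\<in>UNIV. \<Sum>q\<in>UNIV.
          cnj (\<Sum>i\<in>UNIV. K r p i * x i) * Y$p$q * (\<Sum>j\<in>UNIV. K r q j * y j))"
proof -
  let ?T = "\<lambda>i j r p q. cnj (K r p i * x i) * Y$p$q * (K r q j * y j)"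
  have "(\<Sum>i\<in>UNIV. \<Sum>j\<in>UNIV. cnj (x i) * kraus_map K Y $ i $ j * y j)
      = (\<Sum>i\<in>UNIV. \<Sum>j\<in>UNIV. \<Sum>r\<in>UNIV. \<Sum>p\<in>UNIV. \<Sum>q\<in>UNIV. ?T i j r p q)"
    by (simp add: kraus_map_def sum_distrib_left sum_distrib_right mult_ac)
  also have "\<dots> = (\<Sum>r\<in>UNIV. \<Sum>i\<in>UNIV. \<Sum>j\<in>UNIV. \<Sum>p\<in>UNIV. \<Sum>q\<in>UNIV. ?T i j r p q)"
    by (rule sum_rotate3)
  also have "\<dots> = (\<Sum>r\<in>UNIV. \<Sum>p\<in>UNIV. \<Sum>q\<in>UNIV. \<Sum>i\<in>UNIV. \<Sum>j\<in>UNIV. ?T i j r p q)"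
    by (rule sum.cong[OF refl], rule sum_swap_pairs)
  also have "\<dots> = (\<Sum>r\<in>UNIV. \<Sum>p\<in>UNIV. \<Sum>q\<in>UNIV.
          cnj (\<Sum>i\<in>UNIV. K r p i * x i) * Y$p$q * (\<Sum>j\<in>UNIV. K r q j * y j))"
    by (simp add: sum_distrib_left sum_distrib_right mult_ac)
  finally show ?thesis .
qed

lemma kraus_map_completely_positive: "completely_positive (kraus_map K)"
  unfolding completely_positive_def psd_block_def Let_def
proof (intro allI impI)
  fix n :: nat and X :: "nat \<Rightarrow> nat \<Rightarrow> complex^'a^'a" and v :: "nat \<Rightarrow> 'b \<Rightarrow> complex"
  assume psd: "\<forall>v. Im (\<Sum>i<n. \<Sum>j<n. \<Sum>p\<in>UNIV. \<Sum>q\<in>UNIV. cnj (v i p) * X i j $ p $ q * v j q) = 0 \<and>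
             0 \<le> Re (\<Sum>i<n. \<Sum>j<n. \<Sum>p\<in>UNIV. \<Sum>q\<in>UNIV. cnj (v i p) * X i j $ p $ q * v j q)"
  define w where "w r a p = (\<Sum>i\<in>UNIV. K r p i * v a i)" for r a p
  define S where "S r = (\<Sum>a<n. \<Sum>b<n. \<Sum>p\<in>UNIV. \<Sum>q\<in>UNIV. cnj (w r a p) * X a b $ p $ q * w r b q)" for r
  have "(\<Sum>a<n. \<Sum>b<n. \<Sum>i\<in>UNIV. \<Sum>j\<in>UNIV. cnj (v a i) * kraus_map K (X a b) $ i $ j * v b j)
      = (\<Sum>a<n. \<Sum>b<n. \<Sum>r\<in>UNIV. \<Sum>p\<in>UNIV. \<Sum>q\<in>UNIV. cnj (w r a p) * X a b $ p $ q * w r b q)"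
    by (simp only: kraus_map_quadratic_form w_def)
  also have "\<dots> = (\<Sum>r\<in>UNIV. S r)"
    unfolding S_def by (rule sum_rotate3)
  finally have form: "(\<Sum>a<n. \<Sum>b<n. \<Sum>i\<in>UNIV. \<Sum>j\<in>UNIV. cnj (v a i) * kraus_map K (X a b) $ i $ j * v b j)
      = (\<Sum>r\<in>UNIV. S r)" .
  have "Im (S r) = 0 \<and> 0 \<le> Re (S r)" for r
    using psd unfolding S_def by blast
  then show "Im (\<Sum>a<n. \<Sum>b<n. \<Sum>i\<in>UNIV. \<Sum>j\<in>UNIV. cnj (v a i) * kraus_map K (X a b) $ i $ j * v b j) = 0 \<and>
      0 \<le> Re (\<Sum>a<n. \<Sum>b<n. \<Sum>i\<in>UNIV. \<Sum>j\<in>UNIV. cnj (v a i) * kraus_map K (X a b) $ i $ j * v b j)"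
    unfolding form by (simp add: Im_sum Re_sum sum_nonneg)
qed

lemma Emap_kron: "Emap S (a \<otimes>\<^sub>K b) = a \<diamond> Pmap S b"
  by (simp add: vec_eq_iff Emap_def Pmap_def kron_def schur_def sum_distrib_left mult_ac)

lemma Pmap_one: "Pmap S (mat 1) = (\<chi> i j. \<Sum>k\<in>UNIV. complex_of_real (sqrt (S$i$k * S$j$k)))"
  by (simp add: vec_eq_iff Pmap_def mat_def if_distrib sum.delta cong: if_cong)

lemma Pmap_one_diag:
  assumes "stochastic S" shows "Pmap S (mat 1) $ i $ i = 1"
  using assms by (simp add: Pmap_one stochastic_def flip: of_real_sum)

lemma mat_one_schur: "(\<And>i. A$i$i = 1) \<Longrightarrow> mat 1 \<diamond> A = mat 1"
  by (simp add: vec_eq_iff schur_def mat_def)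

lemma kron_mat_one: "(mat 1 :: ('n::finite \<times> 'n) cmat) = mat 1 \<otimes>\<^sub>K mat 1"
  by (auto simp: vec_eq_iff kron_def mat_def prod_eq_iff)

lemma mlinear_schur_Emap: "mlinear (\<lambda>X. C \<diamond> Emap S X)"
  by (simp add: mlinear_def vec_eq_iff schur_def Emap_def mscale_def sum.distrib
      distrib_left sum_distrib_left mult_ac)

lemma schur_Pmap_one_Emap_eq_kraus_map:
  "Pmap Q (mat 1) \<diamond> Emap S X = kraus_map
     (\<lambda>r (p, k) i. if p = i then complex_of_real (sqrt (Q$i$r) * sqrt (S$i$k)) else 0) X"
  (is "_ = kraus_map ?K X")
proof -
  let ?T = "\<lambda>i j r k l. complex_of_real (sqrt (Q$i$r) * sqrt (S$i$k)) * X$(i,k)$(j,l)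
      * complex_of_real (sqrt (Q$j$r) * sqrt (S$j$l))"
  have "(Pmap Q (mat 1) \<diamond> Emap S X) $ i $ j = (\<Sum>k\<in>UNIV. \<Sum>l\<in>UNIV. \<Sum>r\<in>UNIV. ?T i j r k l)"
    for i j by (simp add: schur_def Pmap_one Emap_def real_sqrt_mult sum_distrib_left
        sum_distrib_right mult_ac)
  also have "\<dots> i j = (\<Sum>r\<in>UNIV. \<Sum>k\<in>UNIV. \<Sum>l\<in>UNIV. ?T i j r k l)" for i j
    by (rule sum_rotate3)
  also have "\<dots> i j = kraus_map ?K X $ i $ j" for i j
    by (simp add: kraus_map_def sum_UNIV_prod if_distrib[of cnj] if_distrib[of "\<lambda>z. z * _"]
        if_distrib[of "\<lambda>z. _ * z"] sum_if_zero sum.delta sum.delta' cong: if_cong)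
  finally show ?thesis by (simp add: vec_eq_iff)
qed

lemma completely_positive_schur_Pmap_one_Emap:
  "completely_positive (\<lambda>X. Pmap Q (mat 1) \<diamond> Emap S X)"
  unfolding schur_Pmap_one_Emap_eq_kraus_map by (rule kraus_map_completely_positive)

theorem mainTheorem6:
  fixes Pi Q :: "real^'n::finite^'n"
    and EO :: "('n \<times> 'n) cmat \<Rightarrow> 'n cmat"
  assumes "stochastic Pi" and "stochastic Q"
    and "mlinear EO"
    and "\<forall>a b. EO (a \<otimes>\<^sub>K b) = Emap Pi (Emap Q (a \<otimes>\<^sub>K mat 1) \<otimes>\<^sub>K b)"
  shows "completely_positive EO \<and> EO (mat 1) = mat 1 \<and>
    (\<forall>a b. EO (a \<otimes>\<^sub>K b) = a \<diamond> Pmap Q (mat 1) \<diamond> Pmap Pi b \<and>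
       EO (a \<otimes>\<^sub>K b) = (\<chi> i j. \<Sum>k\<in>UNIV. \<Sum>m\<in>UNIV. \<Sum>l\<in>UNIV.
          a$i$j * b$m$l * complex_of_real (sqrt (Q$i$k * Q$j$k))
            * complex_of_real (sqrt (Pi$i$m * Pi$j$l))))"
proof (intro conjI allI)
  have on_kron: "EO (a \<otimes>\<^sub>K b) = a \<diamond> Pmap Q (mat 1) \<diamond> Pmap Pi b" for a b
    using assms(4) by (simp add: Emap_kron)
  then show "EO (a \<otimes>\<^sub>K b) = a \<diamond> Pmap Q (mat 1) \<diamond> Pmap Pi b" for a b .
  have "EO = (\<lambda>X. Pmap Q (mat 1) \<diamond> Emap Pi X)"
    using assms(3) mlinear_schur_Emap
    by (rule mlinear_eq_on_kron) (simp add: on_kron Emap_kron vec_eq_iff schur_def mult_ac)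
  then show "completely_positive EO"
    using completely_positive_schur_Pmap_one_Emap by simp
  show "EO (mat 1) = mat 1"
    using assms(1,2) by (simp add: kron_mat_one on_kron mat_one_schur Pmap_one_diag)
  show "EO (a \<otimes>\<^sub>K b) = (\<chi> i j. \<Sum>k\<in>UNIV. \<Sum>m\<in>UNIV. \<Sum>l\<in>UNIV.
          a$i$j * b$m$l * complex_of_real (sqrt (Q$i$k * Q$j$k))
            * complex_of_real (sqrt (Pi$i$m * Pi$j$l)))" for a b
    unfolding on_kron Pmap_one
    by (simp add: vec_eq_iff schur_def Pmap_def sum_distrib_left sum_distrib_right mult_ac)
      (subst sum_rotate3, simp)
qed

end
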